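(* (ZFC) $\mathfrak{d}\le\mathfrak{i}_{cl}$.
   Context: An independent family is a set $\mathcal{I}\subseteq\mathcal{P}(\omega)$ such that for all disjoint finite $\mathcal{A}_0,\mathcal{A}_1\subseteq\mathcal{I}$, the set $\bigcap_{x\in\mathcal{A}_0}x\cap\bigcap_{x\in\mathcal{A}_1}(\omega\setminus x)$ is infinite; it is a maximal independent family if it is maximal under inclusion among independent families. $\mathfrak{i}_{cl}$ is the smallest cardinality of a collection of closed subsets of $\mathcal{P}(\omega)$ (identified with $2^\omega$ via characteristic functions) whose union is a maximal independent family. $\mathfrak{d}$ is the dominating number, the least size of a family $\mathcal{F}\subseteq\omega^\omega$ such that every $g\in\omega^\omega$ is eventually dominated by some member of $\mathcal{F}$. *)

theory Defs
  imports "HOL-Analysis.Analysis"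
begin

text \<open>Subsets of omega are identified with points of the Cantor space nat => bool
  (product topology of discrete bool) via characteristic functions.\<close>

definition char_fun :: "nat set \<Rightarrow> (nat \<Rightarrow> bool)" where
  "char_fun x = (\<lambda>n. n \<in> x)"

definition closed_in_P_omega :: "nat set set \<Rightarrow> bool" where
  "closed_in_P_omega c \<longleftrightarrow> closed (char_fun ` c)"

definition independent_family :: "nat set set \<Rightarrow> bool" where
  "independent_family I \<longleftrightarrow>
     (\<forall>A0 A1. finite A0 \<and> finite A1 \<and> A0 \<subseteq> I \<and> A1 \<subseteq> I \<and> A0 \<inter> A1 = {} \<longrightarrow>
        infinite ((\<Inter>x\<in>A0. x) \<inter> (\<Inter>x\<in>A1. - x)))"

definition maximal_independent_family :: "nat set set \<Rightarrow> bool" where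
  "maximal_independent_family I \<longleftrightarrow> independent_family I \<and>
     (\<forall>J. independent_family J \<and> I \<subseteq> J \<longrightarrow> J = I)"

definition dominating_family :: "(nat \<Rightarrow> nat) set \<Rightarrow> bool" where
  "dominating_family F \<longleftrightarrow> (\<forall>g. \<exists>f\<in>F. \<forall>\<^sub>F n in sequentially. g n \<le> f n)"

end

theory Submission
  imports Defs "HOL-Algebra.Free_Abelian_Groups"
begin

(* Let I be the union of C. Finite independent families are never maximal, so I is infinite, and
   compactness of the Cantor space yields A_0, A_1, ... in I, all different from a point B, with
   A_l agreeing with B below l. For finite t \<subseteq> C the union of t is compact, so for fixed n
   and N there is a bound H(a) such that every Boolean pattern on n members of that union,
   together with one common value for A_N, ..., A_(a+1), is realized by some m in [a, H(a));
   summing these bounds over n, N \<le> k gives a function F_t with H(H(k)) \<le> F_t(k) for large k.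
   If some g escaped every F_t, cut omega into blocks J_0, J_1, ..., each starting beyond g on
   the previous one, and let D contain m iff m \<in> A_j for the block J_j containing m. Whenever
   H(H(k)) < g(k), one of the windows [k, H(k)) and [H(k), H(H(k))) lies inside a single block,
   so D splits every Boolean combination of I and I \<union> {D} is still independent. Hence the
   F_t for finite t \<subseteq> C dominate, and there are at most |C| of them. *)

section \<open>Compactness in the Cantor space\<close>

lemma compact_UNIV_fun:
  assumes "compact (UNIV :: 'b::topological_space set)"
  shows "compact (UNIV :: ('a \<Rightarrow> 'b) set)"
proof -
  have "compact_space (euclidean :: 'b topology)"
    using assms by (simp add: compact_space_def)
  then have "compact_space (product_topology (\<lambda>_::'a. (euclidean :: 'b topology)) UNIV)"
    by (simp add: compact_space_product_topology)
  then show ?thesis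
    by (simp add: euclidean_product_topology compact_space_def)
qed

lemma compact_UNIV_bool_fun: "compact (UNIV :: ('a \<Rightarrow> bool) set)"
  by (intro compact_UNIV_fun finite_imp_compact) simp

lemma open_cylinder:
  fixes B :: "'a \<Rightarrow> 'b::discrete_topology"
  assumes "finite S"
  shows "open {y. \<forall>k\<in>S. y k = B k}"
proof -
  have "{y. \<forall>k\<in>S. y k = B k} = (\<Inter>k\<in>S. (\<lambda>y. y k) -` {B k})"
    by auto
  then show ?thesis
    by (simp add: assms open_INT open_vimage open_discrete)
qed

lemma closed_singleton_fun: "closed {f :: 'a \<Rightarrow> 'b::t1_space}"
proof -
  have "{f} = (\<Inter>x. (\<lambda>g. g x) -` {f x})"
    by auto
  then show ?thesis
    by (simp add: closed_INT closed_vimage)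
qed

lemma open_finitely_determined:
  fixes P :: "('a \<Rightarrow> 'b \<Rightarrow> 'c::discrete_topology) \<Rightarrow> bool"
  assumes "finite S"
    and determined: "\<And>z z'. (\<And>p q. (p, q) \<in> S \<Longrightarrow> z p q = z' p q) \<Longrightarrow> P z \<Longrightarrow> P z'"
  shows "open {z. P z}"
  unfolding open_subopen[of "{z. P z}"]
proof
  fix z assume "z \<in> {z. P z}"
  define T where "T = (\<Inter>(p, q)\<in>S. (\<lambda>y. y p q) -` {z p q})"
  have "continuous_on UNIV ((\<lambda>x. x q) \<circ> (\<lambda>y::'a \<Rightarrow> 'b \<Rightarrow> 'c. y p))" for p q
    by (rule continuous_on_compose) (auto intro: continuous_on_subset[OF continuous_on_product_coordinates])
  then have "open ((\<lambda>y. y p q) -` {z p q})" for p q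
    by (intro open_vimage open_discrete) (simp_all add: o_def)
  then have "open T"
    unfolding T_def using assms(1) by (intro open_INT) auto
  moreover have "T \<subseteq> {z. P z}"
  proof
    fix y assume "y \<in> T"
    then have "\<And>p q. (p, q) \<in> S \<Longrightarrow> z p q = y p q"
      by (auto simp: T_def)
    then show "y \<in> {z. P z}"
      using determined \<open>z \<in> {z. P z}\<close> by blast
  qed
  moreover have "z \<in> T"
    by (auto simp: T_def)
  ultimately show "\<exists>T. open T \<and> z \<in> T \<and> T \<subseteq> {z. P z}"
    by blast
qed

lemma closed_finitely_determined:
  fixes P :: "('a \<Rightarrow> 'b \<Rightarrow> 'c::discrete_topology) \<Rightarrow> bool"
  assumes "finite S"
    and "\<And>z z'. (\<And>p q. (p, q) \<in> S \<Longrightarrow> z p q = z' p q) \<Longrightarrow> P z \<Longrightarrow> P z'"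
  shows "closed {z. P z}"
proof -
  have "open {z. \<not> P z}"
  proof (rule open_finitely_determined[OF assms(1)])
    fix z z' :: "'a \<Rightarrow> 'b \<Rightarrow> 'c"
    assume "\<And>p q. (p, q) \<in> S \<Longrightarrow> z p q = z' p q" "\<not> P z"
    then show "\<not> P z'"
      using assms(2)[of z' z] by auto
  qed
  then show ?thesis
    by (simp add: closed_def Collect_neg_eq)
qed

lemma compact_uniform_threshold:
  fixes K :: "'a::topological_space set"
  assumes "compact K"
    and "\<And>M. open {z. R z (M::nat)}"
    and "\<And>z. z \<in> K \<Longrightarrow> \<exists>M. R z M"
    and mono: "\<And>z M M'. R z M \<Longrightarrow> M \<le> M' \<Longrightarrow> R z M'"
  shows "\<exists>M. \<forall>z\<in>K. R z M"
proof -
  have "K \<subseteq> (\<Union>M. {z. R z M})"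
    using assms(3) by blast
  then obtain T where "T \<subseteq> UNIV" "finite T" and cover: "K \<subseteq> (\<Union>M\<in>T. {z. R z M})"
    by (rule compactE_image[OF assms(1) assms(2)])
  have "\<forall>z\<in>K. R z (\<Sum>T)"
  proof
    fix z assume "z \<in> K"
    then obtain M where "M \<in> T" "R z M"
      using cover by blast
    then show "R z (\<Sum>T)"
      using mono member_le_sum[of M T id] \<open>finite T\<close> by auto
  qed
  then show ?thesis ..
qed

section \<open>Splitting sets and maximality\<close>

abbreviation cell :: "nat set set \<Rightarrow> nat set set \<Rightarrow> nat set" where
  "cell A0 A1 \<equiv> (\<Inter>x\<in>A0. x) \<inter> (\<Inter>x\<in>A1. - x)"

lemma independent_familyD:
  assumes "independent_family I" "finite A0" "finite A1" "A0 \<subseteq> I" "A1 \<subseteq> I" "A0 \<inter> A1 = {}"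
  shows "infinite (cell A0 A1)"
  using assms unfolding independent_family_def by blast

definition splits :: "nat set \<Rightarrow> nat set set \<Rightarrow> bool" where
  "splits D I \<longleftrightarrow> (\<forall>A0 A1. finite A0 \<and> finite A1 \<and> A0 \<subseteq> I \<and> A1 \<subseteq> I \<and> A0 \<inter> A1 = {} \<longrightarrow>
     infinite (cell A0 A1 \<inter> D) \<and> infinite (cell A0 A1 - D))"

lemma splitsD:
  assumes "splits D I" "finite A0" "finite A1" "A0 \<subseteq> I" "A1 \<subseteq> I" "A0 \<inter> A1 = {}"
  shows "infinite (cell A0 A1 \<inter> D)" "infinite (cell A0 A1 - D)"
  using assms unfolding splits_def by blast+

lemma splits_imp_independent_insert:
  assumes "splits D I"
  shows "independent_family (insert D I)"
  unfolding independent_family_def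
proof (intro allI impI)
  fix A0 A1
  assume A: "finite A0 \<and> finite A1 \<and> A0 \<subseteq> insert D I \<and> A1 \<subseteq> insert D I \<and> A0 \<inter> A1 = {}"
  let ?B0 = "A0 - {D}" and ?B1 = "A1 - {D}"
  have D_splits: "infinite (cell ?B0 ?B1 \<inter> D)" "infinite (cell ?B0 ?B1 - D)"
    using A by (intro splitsD[OF assms]; auto)+
  consider "D \<in> A0" | "D \<in> A1" | "D \<notin> A0" "D \<notin> A1"
    by blast
  then show "infinite (cell A0 A1)"
  proof cases
    case 1
    moreover have "D \<notin> A1"
      using 1 A by blast
    ultimately have "cell A0 A1 = cell ?B0 ?B1 \<inter> D"
      by auto
    then show ?thesis
      using D_splits by simp
  next
    case 2
    moreover have "D \<notin> A0"
      using 2 A by blast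
    ultimately have "cell A0 A1 = cell ?B0 ?B1 - D"
      by auto
    then show ?thesis
      using D_splits by simp
  next
    case 3
    then have "cell ?B0 ?B1 \<inter> D \<subseteq> cell A0 A1"
      by auto
    then show ?thesis
      using D_splits(1) finite_subset by blast
  qed
qed

lemma splits_imp_not_maximal:
  assumes "splits D I"
  shows "\<not> maximal_independent_family I"
proof
  assume "maximal_independent_family I"
  then have "insert D I = I"
    using splits_imp_independent_insert[OF assms]
    by (simp add: maximal_independent_family_def subset_insertI)
  moreover have "infinite (cell {D} {} - D)" if "D \<in> I"
    using that by (intro splitsD[OF assms]) auto
  ultimately show False
    by auto
qed

lemma splitting_set_of_infinite_fibres:
  fixes f :: "nat \<Rightarrow> 'a"
  assumes infinite_fibre: "\<And>m. infinite (f -` {f m})"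
  obtains D where "\<And>m. infinite (f -` {f m} \<inter> D)" "\<And>m. infinite (f -` {f m} - D)"
proof
  \<comment> \<open>D takes every other element of each fibre.\<close>
  let ?e = "\<lambda>m. enumerate (f -` {f m})"
  define D where "D = {m. \<exists>n. even n \<and> ?e m n = m}"
  fix m
  let ?S = "f -` {f m}"
  have inj_enum: "inj (enumerate ?S)"
    using strict_mono_enumerate[OF infinite_fibre] strict_mono_imp_inj_on by blast
  have in_S: "enumerate ?S n \<in> ?S" for n
    using enumerate_in_set[OF infinite_fibre] .
  then have same_fibre: "?e (enumerate ?S n) = enumerate ?S" for n
    by simp
  have "enumerate ?S (2 * n) \<in> D" for n
    unfolding D_def mem_Collect_eq same_fibre by (rule exI[of _ "2 * n"]) simp
  then have "range (\<lambda>n. enumerate ?S (2 * n)) \<subseteq> ?S \<inter> D"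
    using in_S by auto
  moreover have "infinite (range (\<lambda>n. enumerate ?S (2 * n)))"
    by (rule range_inj_infinite) (simp add: inj_def inj_eq[OF inj_enum])
  ultimately show "infinite (?S \<inter> D)"
    using finite_subset by blast
  have "enumerate ?S (Suc (2 * n)) \<notin> D" for n
    using same_fibre inj_enum unfolding D_def by (auto dest: injD)
  then have "range (\<lambda>n. enumerate ?S (Suc (2 * n))) \<subseteq> ?S - D"
    using in_S by auto
  moreover have "infinite (range (\<lambda>n. enumerate ?S (Suc (2 * n))))"
    by (rule range_inj_infinite) (simp add: inj_def inj_eq[OF inj_enum])
  ultimately show "infinite (?S - D)"
    using finite_subset by blast
qed

lemma finite_independent_family_not_maximal:
  assumes "finite I"
  shows "\<not> maximal_independent_family I"
proof
  assume max: "maximal_independent_family I"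
  then have ind: "independent_family I"
    by (simp add: maximal_independent_family_def)
  \<comment> \<open>The fibres of f are the atoms of the Boolean algebra generated by I.\<close>
  define f where "f m = {x\<in>I. m \<in> x}" for m
  have fibre: "cell (f m) (I - f m) \<subseteq> f -` {f m}" for m
    unfolding f_def by auto
  moreover have "infinite (cell (f m) (I - f m))" for m
    using assms by (intro independent_familyD[OF ind]) (auto simp: f_def)
  ultimately have "infinite (f -` {f m})" for m
    by (meson finite_subset)
  then obtain D where D: "\<And>m. infinite (f -` {f m} \<inter> D)" "\<And>m. infinite (f -` {f m} - D)"
    using splitting_set_of_infinite_fibres by blast
  have "splits D I"
    unfolding splits_def
  proof (intro allI impI)
    fix A0 A1
    assume A: "finite A0 \<and> finite A1 \<and> A0 \<subseteq> I \<and> A1 \<subseteq> I \<and> A0 \<inter> A1 = {}"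
    then obtain m where "m \<in> cell A0 A1"
      using independent_familyD[OF ind] by (metis finite.emptyI ex_in_conv)
    then have "f -` {f m} \<subseteq> cell A0 A1"
      using A unfolding f_def by blast
    then have "f -` {f m} \<inter> D \<subseteq> cell A0 A1 \<inter> D" "f -` {f m} - D \<subseteq> cell A0 A1 - D"
      by blast+
    then show "infinite (cell A0 A1 \<inter> D) \<and> infinite (cell A0 A1 - D)"
      using D[of m] by (meson finite_subset)
  qed
  then show False
    using splits_imp_not_maximal max by blast
qed

section \<open>A block partition adapted to a function\<close>

definition block_start :: "(nat \<Rightarrow> nat) \<Rightarrow> nat \<Rightarrow> nat" where
  "block_start g j = ((\<lambda>k. Suc (k + (\<Sum>i\<le>k. g i))) ^^ j) 0"

definition block_index :: "(nat \<Rightarrow> nat) \<Rightarrow> nat \<Rightarrow> nat" where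
  "block_index g m = (LEAST j. m < block_start g (Suc j))"

definition diagonal_set :: "(nat \<Rightarrow> nat) \<Rightarrow> (nat \<Rightarrow> nat set) \<Rightarrow> nat set" where
  "diagonal_set g A = {m. m \<in> A (block_index g m)}"

lemma block_start_0 [simp]: "block_start g 0 = 0"
  by (simp add: block_start_def)

lemma block_start_Suc: "block_start g (Suc j) = Suc (block_start g j + (\<Sum>i\<le>block_start g j. g i))"
  by (simp add: block_start_def)

lemma strict_mono_block_start: "strict_mono (block_start g)"
  unfolding strict_mono_Suc_iff by (simp add: block_start_Suc)

lemma block_index_eqI:
  assumes "block_start g j \<le> m" "m < block_start g (Suc j)"
  shows "block_index g m = j"
  unfolding block_index_def
proof (rule Least_equality)
  fix i
  assume "m < block_start g (Suc i)"
  then have "block_start g j < block_start g (Suc i)"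
    using assms(1) by simp
  then show "j \<le> i"
    using strict_mono_less[OF strict_mono_block_start] by simp
qed (rule assms(2))

lemma block_index_bounds:
  "block_start g (block_index g m) \<le> m" "m < block_start g (Suc (block_index g m))"
proof -
  have "m < block_start g (Suc m)"
    using strict_mono_imp_increasing[OF strict_mono_block_start[of g], of "Suc m"] by simp
  then show upper: "m < block_start g (Suc (block_index g m))"
    unfolding block_index_def by (rule LeastI)
  show "block_start g (block_index g m) \<le> m"
  proof (cases "block_index g m")
    case (Suc i)
    then have "\<not> m < block_start g (Suc i)"
      unfolding block_index_def by (metis lessI not_less_Least)
    then show ?thesis
      using Suc by simp
  qed simp
qed

lemma less_block_start_Suc_Suc:
  assumes "k \<le> block_start g (Suc j)"
  shows "g k < block_start g (Suc (Suc j))"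
proof -
  have "g k \<le> (\<Sum>i\<le>block_start g (Suc j). g i)"
    using assms by (intro member_le_sum) auto
  then show ?thesis
    by (simp add: block_start_Suc[of g "Suc j"])
qed

lemma diagonal_set_splits:
  fixes h g :: "nat \<Rightarrow> nat"
  assumes hit: "\<And>a b. \<exists>m. a \<le> m \<and> m < h a \<and> m \<in> R \<and> (\<forall>l. N \<le> l \<and> l \<le> Suc a \<longrightarrow> (m \<in> A l) = b)"
    and escape: "\<exists>\<^sub>F k in sequentially. h (h k) < g k"
  shows "infinite (R \<inter> diagonal_set g A)" "infinite (R - diagonal_set g A)"
proof -
  let ?D = "diagonal_set g A"
  have window: "\<exists>m\<ge>a. m \<in> R \<and> (m \<in> ?D) = b"
    if "N \<le> j" "j \<le> Suc a" "block_start g j \<le> a" "h a \<le> block_start g (Suc j)" for a j b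
  proof -
    obtain m where m: "a \<le> m" "m < h a" "m \<in> R" "\<forall>l. N \<le> l \<and> l \<le> Suc a \<longrightarrow> (m \<in> A l) = b"
      using hit by blast
    have "block_index g m = j"
      using m that by (intro block_index_eqI) auto
    then show ?thesis
      using m that by (auto simp: diagonal_set_def)
  qed
  have "\<exists>m\<ge>c. m \<in> R \<and> (m \<in> ?D) = b" for c b
  proof -
    obtain k where k: "c + block_start g N \<le> k" "h (h k) < g k"
      using escape unfolding frequently_sequentially by blast
    define j where "j = block_index g k"
    have j: "block_start g j \<le> k" "k < block_start g (Suc j)"
      unfolding j_def by (rule block_index_bounds)+
    have "N \<le> j"
      using k(1) j(2) strict_mono_less[OF strict_mono_block_start[of g], of N "Suc j"] by simp
    have "j \<le> k"
      using j(1) strict_mono_imp_increasing[OF strict_mono_block_start[of g], of j] by simp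
    have "k < h k"
      using hit[of k True] by auto
    have hhk: "h (h k) < block_start g (Suc (Suc j))"
      using k(2) less_block_start_Suc_Suc[of k g j] j(2) by simp
    \<comment> \<open>As h (h k) lies below block j + 2, either [k, h k) stays in block j
      or [h k, h (h k)) lies in block j + 1.\<close>
    show ?thesis
    proof (cases "h k \<le> block_start g (Suc j)")
      case True
      then obtain m where "k \<le> m" "m \<in> R" "(m \<in> ?D) = b"
        using window[of j k b] \<open>N \<le> j\<close> \<open>j \<le> k\<close> j(1) by auto
      then show ?thesis
        using k(1) by (intro exI[of _ m]) auto
    next
      case False
      have "Suc j \<le> block_start g (Suc j)"
        by (rule strict_mono_imp_increasing[OF strict_mono_block_start])
      then obtain m where "h k \<le> m" "m \<in> R" "(m \<in> ?D) = b"
        using window[of "Suc j" "h k" b] False \<open>N \<le> j\<close> hhk by auto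
      then show ?thesis
        using k(1) \<open>k < h k\<close> by (intro exI[of _ m]) auto
    qed
  qed
  then show "infinite (R \<inter> ?D)" "infinite (R - ?D)"
    unfolding infinite_nat_iff_unbounded_le by blast+
qed

section \<open>Uniform realization bounds\<close>

lemma finite_witness_bound:
  assumes "finite P" "\<And>p. p \<in> P \<Longrightarrow> \<exists>k::nat. Q p k"
  shows "\<exists>N. \<forall>p\<in>P. \<exists>k<N. Q p k"
proof -
  obtain w where w: "\<And>p. p \<in> P \<Longrightarrow> Q p (w p)"
    using assms(2) by metis
  obtain N where "\<And>p. p \<in> P \<Longrightarrow> w p < N"
    using finite_nat_set_iff_bounded[of "w ` P"] assms(1) by auto
  then show ?thesis
    using w by blast
qed

lemma finite_family_separated_below:
  fixes B :: "nat \<Rightarrow> bool"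
  assumes "finite S"
  shows "\<exists>N. \<forall>x\<in>S. (char_fun x = B \<or> (\<exists>k<N. (k \<in> x) \<noteq> B k)) \<and>
    (\<forall>y\<in>S. x \<noteq> y \<longrightarrow> (\<exists>k<N. (k \<in> x) \<noteq> (k \<in> y)))"
proof -
  have "\<exists>N1. \<forall>x\<in>S. \<exists>k<N1. char_fun x \<noteq> B \<longrightarrow> (k \<in> x) \<noteq> B k"
    using assms by (intro finite_witness_bound) (auto simp: char_fun_def fun_eq_iff)
  then obtain N1 where N1: "\<forall>x\<in>S. \<exists>k<N1. char_fun x \<noteq> B \<longrightarrow> (k \<in> x) \<noteq> B k"
    by blast
  have "\<exists>N2. \<forall>p\<in>S \<times> S. \<exists>k<N2. fst p \<noteq> snd p \<longrightarrow> (k \<in> fst p) \<noteq> (k \<in> snd p)"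
    using assms by (intro finite_witness_bound) auto
  then obtain N2 where N2: "\<forall>p\<in>S \<times> S. \<exists>k<N2. fst p \<noteq> snd p \<longrightarrow> (k \<in> fst p) \<noteq> (k \<in> snd p)"
    by blast
  have "\<forall>x\<in>S. (char_fun x = B \<or> (\<exists>k<N1 + N2. (k \<in> x) \<noteq> B k)) \<and>
      (\<forall>y\<in>S. x \<noteq> y \<longrightarrow> (\<exists>k<N1 + N2. (k \<in> x) \<noteq> (k \<in> y)))"
  proof (intro ballI conjI impI)
    fix x assume "x \<in> S"
    then show "char_fun x = B \<or> (\<exists>k<N1 + N2. (k \<in> x) \<noteq> B k)"
      using N1 trans_less_add1 by blast
    fix y assume "y \<in> S" "x \<noteq> y"
    then show "\<exists>k<N1 + N2. (k \<in> x) \<noteq> (k \<in> y)"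
      using N2 \<open>x \<in> S\<close> trans_less_add2 by fastforce
  qed
  then show ?thesis
    by blast
qed

locale converging_sequence =
  fixes I :: "nat set set" and A :: "nat \<Rightarrow> nat set" and B :: "nat \<Rightarrow> bool"
  assumes independent: "independent_family I"
    and A_mem: "A l \<in> I"
    and A_neq: "char_fun (A l) \<noteq> B"
    and A_agrees: "k < l \<Longrightarrow> (k \<in> A l) = B k"

lemma infinite_independent_family_converging_sequence:
  assumes "independent_family I" "infinite I"
  shows "\<exists>A B. converging_sequence I A B"
proof -
  have "inj char_fun"
    by (rule injI) (simp add: char_fun_def fun_eq_iff set_eq_iff)
  then have "infinite (char_fun ` I)"
    using assms(2) finite_imageD inj_on_subset by blast
  then obtain B where B: "B islimpt (char_fun ` I)"
    using Heine_Borel_imp_Bolzano_Weierstrass[OF compact_UNIV_bool_fun] by blast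
  have "\<exists>x\<in>I. char_fun x \<noteq> B \<and> (\<forall>k<l. (k \<in> x) = B k)" for l
  proof -
    have "B \<in> {y. \<forall>k\<in>{..<l}. y k = B k}" "open {y. \<forall>k\<in>{..<l}. y k = B k}"
      by (simp_all add: open_cylinder)
    then obtain y where "y \<in> char_fun ` I" "y \<in> {y. \<forall>k\<in>{..<l}. y k = B k}" "y \<noteq> B"
      by (rule islimptE[OF B])
    then show ?thesis
      by (auto simp: char_fun_def)
  qed
  then obtain A where "\<And>l. A l \<in> I \<and> char_fun (A l) \<noteq> B \<and> (\<forall>k<l. (k \<in> A l) = B k)"
    by metis
  with assms(1) have "converging_sequence I A B"
    by unfold_locales auto
  then show ?thesis
    by blast
qed

context converging_sequence
begin

text \<open>A configuration z codes n members z 0, ..., z (n - 1) of U that are told apart from each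
  other, and unless equal to B also from B, by their values below N; so none of them is an A l
  with l \<ge> N. Row z n is the pattern to be realized: z n i for the i-th set and z n n for all
  of A N, ..., A (Suc a).\<close>

definition configurations :: "nat set set \<Rightarrow> nat \<Rightarrow> nat \<Rightarrow> (nat \<Rightarrow> nat \<Rightarrow> bool) set" where
  "configurations U n N = {z. (\<forall>i<n. z i \<in> char_fun ` U \<and> (z i = B \<or> (\<exists>k<N. z i k \<noteq> B k)))
     \<and> (\<forall>i<n. \<forall>j<n. i \<noteq> j \<longrightarrow> (\<exists>k<N. z i k \<noteq> z j k))}"

definition realizes :: "nat \<Rightarrow> nat \<Rightarrow> nat \<Rightarrow> (nat \<Rightarrow> nat \<Rightarrow> bool) \<Rightarrow> nat \<Rightarrow> bool" where
  "realizes n N a z m \<longleftrightarrow> (\<forall>i<n. z i m = z n i) \<and> (\<forall>l. N \<le> l \<and> l \<le> Suc a \<longrightarrow> (m \<in> A l) = z n n)"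

definition hitting_bound :: "nat set set \<Rightarrow> nat \<Rightarrow> nat \<Rightarrow> nat \<Rightarrow> nat" where
  "hitting_bound U n N a =
     (LEAST M. \<forall>z\<in>configurations U n N. \<exists>m. a \<le> m \<and> m < M \<and> realizes n N a z m)"

definition bound_fun :: "nat set set set \<Rightarrow> nat \<Rightarrow> nat" where
  "bound_fun t k = (\<Sum>N\<le>k. \<Sum>n\<le>k. hitting_bound (\<Union>t) n N (hitting_bound (\<Union>t) n N k))"

lemma closed_configurations:
  assumes "closed (char_fun ` U)"
  shows "closed (configurations U n N)"
proof -
  let ?V = "char_fun ` U \<inter> {y. y = B \<or> (\<exists>k<N. y k \<noteq> B k)}"
  have "{y. y = B \<or> (\<exists>k<N. y k \<noteq> B k)} = {B} \<union> - {y. \<forall>k\<in>{..<N}. y k = B k}"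
    by auto
  moreover have "closed ({B} \<union> - {y. \<forall>k\<in>{..<N}. y k = B k})"
    by (intro closed_Un closed_singleton_fun closed_Compl open_cylinder) simp
  ultimately have "closed {y. y = B \<or> (\<exists>k<N. y k \<noteq> B k)}"
    by simp
  with assms have "closed ?V"
    by (rule closed_Int)
  then have "closed (\<Inter>i<n. (\<lambda>z. z i) -` ?V)"
    by (intro closed_INT ballI closed_vimage) auto
  moreover have "closed {z::nat \<Rightarrow> nat \<Rightarrow> bool. \<forall>i<n. \<forall>j<n. i \<noteq> j \<longrightarrow> (\<exists>k<N. z i k \<noteq> z j k)}"
  proof (rule closed_finitely_determined[of "{..<n} \<times> {..<N}"])
    fix z z' :: "nat \<Rightarrow> nat \<Rightarrow> bool"
    assume "\<And>p q. (p, q) \<in> {..<n} \<times> {..<N} \<Longrightarrow> z p q = z' p q"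
      and "\<forall>i<n. \<forall>j<n. i \<noteq> j \<longrightarrow> (\<exists>k<N. z i k \<noteq> z j k)"
    then show "\<forall>i<n. \<forall>j<n. i \<noteq> j \<longrightarrow> (\<exists>k<N. z' i k \<noteq> z' j k)"
      by (metis SigmaI lessThan_iff)
  qed simp
  moreover have "configurations U n N = (\<Inter>i<n. (\<lambda>z. z i) -` ?V) \<inter>
      {z. \<forall>i<n. \<forall>j<n. i \<noteq> j \<longrightarrow> (\<exists>k<N. z i k \<noteq> z j k)}"
    unfolding configurations_def by auto
  ultimately show ?thesis
    by (simp add: closed_Int)
qed

lemma open_realizable: "open {z. \<exists>m. a \<le> m \<and> m < M \<and> realizes n N a z m}"
proof (rule open_finitely_determined[of "{..<n} \<times> {..<M} \<union> {n} \<times> {..n}"])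
  fix z z' :: "nat \<Rightarrow> nat \<Rightarrow> bool"
  assume agree: "\<And>p q. (p, q) \<in> {..<n} \<times> {..<M} \<union> {n} \<times> {..n} \<Longrightarrow> z p q = z' p q"
  assume "\<exists>m. a \<le> m \<and> m < M \<and> realizes n N a z m"
  then obtain m where m: "a \<le> m" "m < M" "realizes n N a z m"
    by blast
  have "z i m = z' i m" if "i < n" for i
    using agree that m(2) by simp
  moreover have "z n i = z' n i" if "i \<le> n" for i
    using agree that by simp
  ultimately have "realizes n N a z' m"
    using m(3) unfolding realizes_def by simp
  with m show "\<exists>m. a \<le> m \<and> m < M \<and> realizes n N a z' m"
    by blast
qed simp

definition pattern_sets :: "nat \<Rightarrow> nat \<Rightarrow> nat \<Rightarrow> (nat \<Rightarrow> nat \<Rightarrow> bool) \<Rightarrow> bool \<Rightarrow> nat set set" where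
  "pattern_sets n N a z b =
     (\<lambda>i. {m. z i m}) ` {i. i < n \<and> z n i = b} \<union> A ` {l \<in> {N..Suc a}. z n n = b}"

lemma realizes_if_in_cell:
  assumes m: "m \<in> cell (pattern_sets n N a z True) (pattern_sets n N a z False)"
  shows "realizes n N a z m"
proof -
  have "z i m = z n i" if "i < n" for i
  proof (cases "z n i")
    case True
    then have "{m. z i m} \<in> pattern_sets n N a z True"
      using that by (simp add: pattern_sets_def)
    then show ?thesis
      using m True by blast
  next
    case False
    then have "{m. z i m} \<in> pattern_sets n N a z False"
      using that by (simp add: pattern_sets_def)
    then show ?thesis
      using m False by blast
  qed
  moreover have "(m \<in> A l) = z n n" if "N \<le> l" "l \<le> Suc a" for l
  proof (cases "z n n")
    case True
    then have "A l \<in> pattern_sets n N a z True"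
      using that by (simp add: pattern_sets_def)
    then show ?thesis
      using m True by blast
  next
    case False
    then have "A l \<in> pattern_sets n N a z False"
      using that by (simp add: pattern_sets_def)
    then show ?thesis
      using m False by blast
  qed
  ultimately show ?thesis
    by (simp add: realizes_def)
qed

lemma configuration_row_mem:
  assumes "U \<subseteq> I" "z \<in> configurations U n N" "i < n"
  shows "{m. z i m} \<in> I"
proof -
  obtain u where "u \<in> U" "z i = char_fun u"
    using assms(2,3) unfolding configurations_def by blast
  then have "{m. z i m} = u"
    by (simp add: char_fun_def)
  then show ?thesis
    using assms(1) \<open>u \<in> U\<close> by blast
qed

lemma configuration_rows_distinct:
  assumes "z \<in> configurations U n N" "i < n" "j < n" "{m. z i m} = {m. z j m}"
  shows "i = j"
proof (rule ccontr)
  assume "i \<noteq> j"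
  then obtain k where "z i k \<noteq> z j k"
    using assms(1-3) unfolding configurations_def by blast
  with assms(4) show False
    by blast
qed

lemma configuration_row_neq_A:
  assumes "z \<in> configurations U n N" "i < n" "N \<le> l"
  shows "{m. z i m} \<noteq> A l"
proof
  assume "{m. z i m} = A l"
  then have "z i = char_fun (A l)"
    by (auto simp: char_fun_def)
  moreover have "char_fun (A l) k = B k" if "k < N" for k
    using A_agrees[of k l] that assms(3) by (simp add: char_fun_def)
  ultimately show False
    using assms(1,2) A_neq[of l] unfolding configurations_def by auto
qed

lemma realizers_infinite:
  assumes "U \<subseteq> I" and z: "z \<in> configurations U n N"
  shows "infinite {m. realizes n N a z m}"
proof -
  let ?P = "pattern_sets n N a z"
  have "finite (?P b)" "?P b \<subseteq> I" for b
    using configuration_row_mem[OF assms] A_mem by (auto simp: pattern_sets_def)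
  moreover have "?P True \<inter> ?P False = {}"
  proof -
    have "{m. z i m} \<noteq> {m. z j m}" if "i < n" "j < n" "z n i" "\<not> z n j" for i j
      using configuration_rows_distinct[OF z] that by blast
    moreover have "{m. z i m} \<noteq> A l" "A l \<noteq> {m. z i m}" if "i < n" "l \<in> {N..Suc a}" for i l
      using configuration_row_neq_A[OF z] that by auto
    ultimately show ?thesis
      unfolding pattern_sets_def by auto
  qed
  ultimately have "infinite (cell (?P True) (?P False))"
    by (intro independent_familyD[OF independent])
  moreover have "cell (?P True) (?P False) \<subseteq> {m. realizes n N a z m}"
    by (intro subsetI CollectI realizes_if_in_cell)
  ultimately show ?thesis
    using finite_subset by blast
qed

lemma hitting_bound_realizes:
  assumes "U \<subseteq> I" "closed (char_fun ` U)" "z \<in> configurations U n N"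
  shows "\<exists>m. a \<le> m \<and> m < hitting_bound U n N a \<and> realizes n N a z m"
proof -
  have "compact (configurations U n N \<inter> UNIV)"
    using closed_configurations[OF assms(2)] compact_UNIV_fun[OF compact_UNIV_bool_fun]
    by (rule closed_Int_compact)
  then have "\<exists>M. \<forall>z\<in>configurations U n N. \<exists>m. a \<le> m \<and> m < M \<and> realizes n N a z m"
  proof (intro compact_uniform_threshold)
    fix z
    assume "z \<in> configurations U n N"
    then obtain m where "a \<le> m" "realizes n N a z m"
      using realizers_infinite[OF assms(1)] unfolding infinite_nat_iff_unbounded_le by blast
    then show "\<exists>M m. a \<le> m \<and> m < M \<and> realizes n N a z m"
      by blast
  qed (auto intro: open_realizable less_le_trans)
  then have "\<forall>z\<in>configurations U n N. \<exists>m. a \<le> m \<and> m < hitting_bound U n N a \<and> realizes n N a z m"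
    unfolding hitting_bound_def by (rule LeastI_ex)
  then show ?thesis
    using assms(3) by blast
qed

lemma enumerated_configuration:
  assumes "bij_betw e {..<n} S" "S \<subseteq> U"
    and separated: "\<forall>x\<in>S. (char_fun x = B \<or> (\<exists>k<N. (k \<in> x) \<noteq> B k)) \<and>
      (\<forall>y\<in>S. x \<noteq> y \<longrightarrow> (\<exists>k<N. (k \<in> x) \<noteq> (k \<in> y)))"
  shows "(\<lambda>i. if i < n then char_fun (e i) else p) \<in> configurations U n N"
proof -
  have e_mem: "e i \<in> S" if "i < n" for i
    using assms(1) that by (auto simp: bij_betw_def)
  have e_inj: "e i = e j \<longleftrightarrow> i = j" if "i < n" "j < n" for i j
    using assms(1) that by (auto simp: bij_betw_def inj_on_def)
  show ?thesis
    unfolding configurations_def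
  proof (intro CollectI conjI allI impI)
    fix i assume "i < n"
    then show "(if i < n then char_fun (e i) else p) \<in> char_fun ` U"
      using e_mem assms(2) by auto
    show "(if i < n then char_fun (e i) else p) = B \<or>
        (\<exists>k<N. (if i < n then char_fun (e i) else p) k \<noteq> B k)"
      using separated e_mem \<open>i < n\<close> by (simp add: char_fun_def)
  next
    fix i j assume "i < n" "j < n" "i \<noteq> j"
    then show "\<exists>k<N. (if i < n then char_fun (e i) else p) k \<noteq> (if j < n then char_fun (e j) else p) k"
      using separated e_mem e_inj by (simp add: char_fun_def)
  qed
qed

lemma cell_realized_uniformly:
  assumes "finite A0" "finite A1" "A0 \<inter> A1 = {}" "A0 \<union> A1 \<subseteq> U" "U \<subseteq> I" "closed (char_fun ` U)"
  shows "\<exists>n N. \<forall>a b. \<exists>m. a \<le> m \<and> m < hitting_bound U n N a \<and> m \<in> cell A0 A1 \<and>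
      (\<forall>l. N \<le> l \<and> l \<le> Suc a \<longrightarrow> (m \<in> A l) = b)"
proof -
  let ?S = "A0 \<union> A1"
  define n where "n = card ?S"
  obtain e where e: "bij_betw e {..<n} ?S"
    using ex_bij_betw_nat_finite[of ?S] assms(1,2) unfolding n_def atLeast0LessThan by blast
  obtain N where N: "\<forall>x\<in>?S. (char_fun x = B \<or> (\<exists>k<N. (k \<in> x) \<noteq> B k)) \<and>
      (\<forall>y\<in>?S. x \<noteq> y \<longrightarrow> (\<exists>k<N. (k \<in> x) \<noteq> (k \<in> y)))"
    using finite_family_separated_below[of ?S B] assms(1,2) by blast
  have "\<exists>m. a \<le> m \<and> m < hitting_bound U n N a \<and> m \<in> cell A0 A1 \<and>
      (\<forall>l. N \<le> l \<and> l \<le> Suc a \<longrightarrow> (m \<in> A l) = b)" for a b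
  proof -
    define z where "z i = (if i < n then char_fun (e i) else (\<lambda>j. if j < n then e j \<in> A0 else b))" for i
    have "z \<in> configurations U n N"
      unfolding z_def using e assms(4) N by (rule enumerated_configuration)
    then obtain m where m: "a \<le> m" "m < hitting_bound U n N a" "realizes n N a z m"
      using hitting_bound_realizes[OF assms(5,6)] by blast
    then have pattern: "m \<in> e i \<longleftrightarrow> e i \<in> A0" if "i < n" for i
      using that unfolding realizes_def by (simp add: z_def char_fun_def)
    have "\<exists>i<n. x = e i" if "x \<in> ?S" for x
      using e that by (auto simp: bij_betw_def)
    then have "m \<in> cell A0 A1"
      using pattern assms(3) by blast
    moreover have "\<forall>l. N \<le> l \<and> l \<le> Suc a \<longrightarrow> (m \<in> A l) = b"
      using m(3) unfolding realizes_def by (simp add: z_def)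
    ultimately show ?thesis
      using m(1,2) by blast
  qed
  then show ?thesis
    by blast
qed

lemma hitting_bound_twice_le_bound_fun:
  assumes "n \<le> k" "N \<le> k"
  shows "hitting_bound (\<Union>t) n N (hitting_bound (\<Union>t) n N k) \<le> bound_fun t k"
proof -
  let ?h = "\<lambda>N n. hitting_bound (\<Union>t) n N (hitting_bound (\<Union>t) n N k)"
  have "?h N n \<le> (\<Sum>n\<le>k. ?h N n)"
    using assms(1) by (intro member_le_sum) auto
  also have "\<dots> \<le> (\<Sum>N\<le>k. \<Sum>n\<le>k. ?h N n)"
    using assms(2) by (intro member_le_sum[of N "{..k}" "\<lambda>N. \<Sum>n\<le>k. ?h N n"]) auto
  finally show ?thesis
    by (simp add: bound_fun_def)
qed

lemma diagonal_set_splits_family: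
  assumes closed: "\<forall>c\<in>C. closed_in_P_omega c" and "I = \<Union>C"
    and escape: "\<And>t. t \<in> Fpow C \<Longrightarrow> \<exists>\<^sub>F k in sequentially. bound_fun t k < g k"
  shows "splits (diagonal_set g A) I"
  unfolding splits_def
proof (intro allI impI)
  fix A0 A1
  assume A: "finite A0 \<and> finite A1 \<and> A0 \<subseteq> I \<and> A1 \<subseteq> I \<and> A0 \<inter> A1 = {}"
  then obtain t where t: "finite t" "t \<subseteq> C" "A0 \<union> A1 \<subseteq> \<Union>t"
    using finite_subset_Union[of "A0 \<union> A1" C] assms(2) by auto
  have "closed (\<Union>c\<in>t. char_fun ` c)"
    using t(1,2) closed unfolding closed_in_P_omega_def by (intro closed_UN) auto
  then have "closed (char_fun ` \<Union>t)"
    by (simp add: image_Union)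
  moreover have "\<Union>t \<subseteq> I"
    using t assms(2) by blast
  ultimately have "\<exists>n N. \<forall>a b. \<exists>m. a \<le> m \<and> m < hitting_bound (\<Union>t) n N a \<and>
      m \<in> cell A0 A1 \<and> (\<forall>l. N \<le> l \<and> l \<le> Suc a \<longrightarrow> (m \<in> A l) = b)"
    using A t(3) by (intro cell_realized_uniformly) auto
  then obtain n N where hit: "\<And>a b. \<exists>m. a \<le> m \<and> m < hitting_bound (\<Union>t) n N a \<and>
      m \<in> cell A0 A1 \<and> (\<forall>l. N \<le> l \<and> l \<le> Suc a \<longrightarrow> (m \<in> A l) = b)"
    by blast
  have le: "hitting_bound (\<Union>t) n N (hitting_bound (\<Union>t) n N k) \<le> bound_fun t k" if "n + N \<le> k" for k
    using that by (intro hitting_bound_twice_le_bound_fun) auto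
  have "\<exists>\<^sub>F k in sequentially. bound_fun t k < g k"
    using escape t(1,2) by (simp add: Fpow_def)
  then have "\<exists>\<^sub>F k in sequentially. bound_fun t k < g k \<and> n + N \<le> k"
    by (rule frequently_eventually_frequently) simp
  then have "\<exists>\<^sub>F k in sequentially. hitting_bound (\<Union>t) n N (hitting_bound (\<Union>t) n N k) < g k"
    by (rule frequently_elim1) (auto dest: le)
  then show "infinite (cell A0 A1 \<inter> diagonal_set g A) \<and> infinite (cell A0 A1 - diagonal_set g A)"
    using diagonal_set_splits[OF hit] by blast
qed

lemma bound_fun_dominating:
  assumes "\<forall>c\<in>C. closed_in_P_omega c" and "I = \<Union>C" and "maximal_independent_family I"
  shows "dominating_family (bound_fun ` Fpow C)"
proof (rule ccontr)
  assume "\<not> dominating_family (bound_fun ` Fpow C)"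
  then obtain g where "\<forall>t\<in>Fpow C. \<not> (\<forall>\<^sub>F k in sequentially. g k \<le> bound_fun t k)"
    unfolding dominating_family_def by blast
  then have escape: "\<exists>\<^sub>F k in sequentially. bound_fun t k < g k" if "t \<in> Fpow C" for t
    using that by (simp add: not_eventually not_le)
  have "splits (diagonal_set g A) I"
    using diagonal_set_splits_family[OF assms(1,2) escape] .
  then show False
    using splits_imp_not_maximal assms(3) by blast
qed

end

lemma countable_not_dominating:
  assumes "countable F"
  shows "\<not> dominating_family F"
proof
  assume "dominating_family F"
  define g where "g n = Suc (\<Sum>i\<le>n. from_nat_into F i n)" for n
  obtain f where "f \<in> F" and "\<forall>\<^sub>F n in sequentially. g n \<le> f n"
    using \<open>dominating_family F\<close> unfolding dominating_family_def by blast
  then obtain N where N: "\<And>n. n \<ge> N \<Longrightarrow> g n \<le> f n"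
    unfolding eventually_sequentially by blast
  obtain i where i: "from_nat_into F i = f"
    using from_nat_into_surj[OF assms \<open>f \<in> F\<close>] by blast
  let ?n = "max N i"
  have "f ?n \<le> (\<Sum>j\<le>?n. from_nat_into F j ?n)"
    using member_le_sum[of i "{..?n}" "\<lambda>j. from_nat_into F j ?n"] i by simp
  then show False
    using N[of ?n] by (simp add: g_def)
qed

theorem theorem1p4:
  fixes C :: "nat set set set"
  assumes "\<forall>c\<in>C. closed_in_P_omega c"
    and "maximal_independent_family (\<Union>C)"
  shows "\<exists>F. dominating_family F \<and> (\<exists>h. inj_on h F \<and> h ` F \<subseteq> C)"
proof -
  have "independent_family (\<Union>C)"
    using assms(2) by (simp add: maximal_independent_family_def)
  moreover have "infinite (\<Union>C)"
    using assms(2) finite_independent_family_not_maximal by blast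
  ultimately obtain A B where "converging_sequence (\<Union>C) A B"
    using infinite_independent_family_converging_sequence by blast
  then interpret converging_sequence "\<Union>C" A B .
  have dom: "dominating_family (bound_fun ` Fpow C)"
    using bound_fun_dominating[OF assms(1) refl assms(2)] .
  have "infinite C"
  proof
    assume "finite C"
    then have "countable (bound_fun ` Fpow C)"
      by (intro countable_image countable_Fpow countable_finite)
    with dom show False
      using countable_not_dominating by blast
  qed
  have "bound_fun ` Fpow C \<lesssim> Fpow C"
    by (rule image_lepoll)
  also have "Fpow C \<lesssim> C"
    using eqpoll_Fpow[OF \<open>infinite C\<close>] by (rule eqpoll_imp_lepoll)
  finally show ?thesis
    using dom unfolding lepoll_def by blast
qed

end
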